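(* Let $f, g:\mathbb{D}\to\mathbb{C}$ be analytic functions on the open unit disc $\mathbb{D}$, and let $L_1, L_2$ be two line segments in $\mathbb{D}$ intersecting at an angle $\theta\in(0,\pi/2)\setminus\pi\mathbb{Q}$, such that $|f(z)|=|g(z)|$ for all $z\in L_1\cup L_2$. Then $f=\beta g$ for some constant $\beta\in\mathbb{T}$.
   Context: $\mathbb{D}=\{z\in\mathbb{C}:|z|<1\}$ and $\mathbb{T}=\{z\in\mathbb{C}:|z|=1\}$. $\pi\mathbb{Q}$ denotes the set of rational multiples of $\pi$. *)

theory Defs
  imports "HOL-Complex_Analysis.Complex_Analysis"
begin

definition line_angle :: "complex \<Rightarrow> complex \<Rightarrow> real" where
  "line_angle d1 d2 = arccos (\<bar>Re (d1 * cnj d2)\<bar> / (cmod d1 * cmod d2))"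

end

theory Submission
  imports Defs
begin

text \<open>If \<open>R\<close> is the reflection in a segment through \<open>p\<close>, the holomorphic function
  \<open>f z * cnj (f (R z))\<close> equals \<open>cmod (f z)\<^sup>2\<close> on the segment, so near \<open>p\<close> it coincides with
  \<open>g z * cnj (g (R z))\<close>. Combining these identities for the two segments shows that \<open>f / g\<close>
  is invariant under \<open>R\<^sub>2 \<circ> R\<^sub>1\<close>, the rotation about \<open>p\<close> by \<open>2 * \<theta>\<close>. As \<open>\<theta> \<notin> pi * \<rat>\<close>,
  this rotation has infinite order, so \<open>f - c * g\<close> vanishes on an infinite orbit on a small
  circle around \<open>p\<close> and hence everywhere; comparing moduli on a segment gives \<open>cmod c = 1\<close>.\<close>

definition line_reflection :: "complex \<Rightarrow> complex \<Rightarrow> complex \<Rightarrow> complex" where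
  "line_reflection p d z = p + d / cnj d * cnj (z - p)"

lemma dist_line_reflection:
  assumes "d \<noteq> 0"
  shows "dist (line_reflection p d z) p = dist z p"
  using assms by (simp add: line_reflection_def dist_norm norm_mult norm_divide del: complex_cnj_diff)

lemma line_reflection_involution:
  assumes "d \<noteq> 0"
  shows "line_reflection p d (line_reflection p d z) = z"
  using assms by (simp add: line_reflection_def field_simps del: complex_cnj_diff)

lemma line_reflection_comp:
  assumes "d1 \<noteq> 0" "d2 \<noteq> 0"
  shows "line_reflection p d2 (line_reflection p d1 z) = p + cnj (d1 * cnj d2) / (d1 * cnj d2) * (z - p)"
  using assms by (simp add: line_reflection_def field_simps del: complex_cnj_diff)

lemma line_reflection_fixes_segment:
  assumes "a \<noteq> b" "p \<in> closed_segment a b" "z \<in> closed_segment a b"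
  shows "line_reflection p (b - a) z = z"
proof -
  obtain s u where p: "p = a + s *\<^sub>R (b - a)" and z: "z = a + u *\<^sub>R (b - a)"
    using assms(2,3) by (auto simp: in_segment scaleR_right_diff_distrib algebra_simps)
  have zp: "z - p = of_real (u - s) * (b - a)"
    unfolding p z by (simp add: scaleR_conv_of_real algebra_simps)
  have "line_reflection p (b - a) z = p + (b - a) / cnj (b - a) * (of_real (u - s) * cnj (b - a))"
    unfolding line_reflection_def zp by simp
  also have "\<dots> = p + (z - p)"
    using assms(1) zp by (simp del: complex_cnj_diff)
  finally show ?thesis by simp
qed

lemma holomorphic_on_cnj_line_reflection:
  assumes "f holomorphic_on ball p r" "d \<noteq> 0"
  shows "(\<lambda>z. cnj (f (line_reflection p d z))) holomorphic_on ball p r"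
proof -
  define A where "A = (\<lambda>w. p + d / cnj d * (w - cnj p))"
  have "A ` cnj ` ball p r \<subseteq> ball p r"
    using dist_line_reflection[OF assms(2)] by (auto simp: A_def line_reflection_def dist_commute)
  then have "f \<circ> A holomorphic_on cnj ` ball p r"
    by (intro holomorphic_on_compose_gen[OF _ assms(1)]) (auto simp: A_def intro!: holomorphic_intros)
  then have "cnj \<circ> (f \<circ> A) \<circ> cnj holomorphic_on ball p r"
    by (intro holomorphic_on_compose_cnj_cnj) auto
  then show ?thesis
    by (simp add: o_def A_def line_reflection_def)
qed

lemma islimpt_closed_segment:
  fixes a b p :: "'a::real_normed_vector"
  assumes "a \<noteq> b" "p \<in> closed_segment a b"
  shows "p islimpt closed_segment a b"
  using connected_imp_perfect[OF connected_segment assms(2)] assms(1) ends_in_segment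
  by (metis singletonD)

text \<open>With \<open>R\<close> the reflection in the segment, \<open>z \<mapsto> f z * cnj (f (R z))\<close> is holomorphic
  and equals \<open>cmod (f z)\<^sup>2\<close> on the segment, so it is determined by \<open>cmod f\<close> there.\<close>
lemma mult_cnj_line_reflection_eq:
  fixes f g :: "complex \<Rightarrow> complex"
  assumes f: "f holomorphic_on ball p r" and g: "g holomorphic_on ball p r"
    and "a \<noteq> b" and p: "p \<in> closed_segment a b"
    and norm_eq: "\<forall>z \<in> closed_segment a b. cmod (f z) = cmod (g z)"
    and z: "z \<in> ball p r"
  shows "f z * cnj (f (line_reflection p (b - a) z)) = g z * cnj (g (line_reflection p (b - a) z))"
proof -
  define R where "R = line_reflection p (b - a)"
  define F where "F = (\<lambda>z. f z * cnj (f (R z)) - g z * cnj (g (R z)))"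
  have "b - a \<noteq> 0"
    using \<open>a \<noteq> b\<close> by simp
  then have holo: "F holomorphic_on ball p r"
    unfolding F_def R_def using f g
    by (intro holomorphic_intros holomorphic_on_cnj_line_reflection)
  have zero: "F w = 0" if "w \<in> closed_segment a b \<inter> ball p r" for w
  proof -
    have "R w = w"
      using that line_reflection_fixes_segment[OF \<open>a \<noteq> b\<close> p] by (simp add: R_def)
    then have "F w = of_real ((cmod (f w))\<^sup>2) - of_real ((cmod (g w))\<^sup>2)"
      by (simp only: F_def complex_norm_square)
    then show ?thesis
      using that norm_eq by simp
  qed
  have "p \<in> ball p r"
    using z by (metis ball_eq_empty centre_in_ball empty_iff not_less)
  then have "p islimpt closed_segment a b \<inter> ball p r"
    by (intro islimpt_Int_eventually[OF islimpt_closed_segment[OF \<open>a \<noteq> b\<close> p]]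
        eventually_at_in_open') simp_all
  then have "F z = 0"
    using analytic_continuation[OF holo open_ball connected_ball _ \<open>p \<in> ball p r\<close> _ zero z] by blast
  then show ?thesis
    by (simp add: F_def R_def)
qed

lemma quotient_invariant_under_two_line_reflections:
  fixes f g :: "complex \<Rightarrow> complex"
  assumes "d1 \<noteq> 0" "d2 \<noteq> 0"
    and refl1: "\<forall>z \<in> ball p r. f z * cnj (f (line_reflection p d1 z)) = g z * cnj (g (line_reflection p d1 z))"
    and refl2: "\<forall>z \<in> ball p r. f z * cnj (f (line_reflection p d2 z)) = g z * cnj (g (line_reflection p d2 z))"
    and g_nonzero: "\<forall>z \<in> ball p r - {p}. g z \<noteq> 0"
    and w: "w \<in> ball p r - {p}"
  shows "f (line_reflection p d2 (line_reflection p d1 w)) / g (line_reflection p d2 (line_reflection p d1 w))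
       = f w / g w"
proof -
  define z where "z = line_reflection p d1 w"
  define w' where "w' = line_reflection p d2 z"
  have "line_reflection p d1 z = w"
    using \<open>d1 \<noteq> 0\<close> by (simp add: z_def line_reflection_involution)
  have punctured: "line_reflection p d u \<in> ball p r - {p}" if "d \<noteq> 0" "u \<in> ball p r - {p}" for d u
    using that dist_line_reflection[OF \<open>d \<noteq> 0\<close>, of p u] by (auto simp: dist_commute)
  have "z \<in> ball p r - {p}" "w' \<in> ball p r - {p}"
    using punctured assms(1,2) w by (simp_all add: z_def w'_def)
  then have "g z \<noteq> 0" "g w \<noteq> 0" "g w' \<noteq> 0"
    using g_nonzero w by auto
  have eq1: "f z * cnj (f w) = g z * cnj (g w)"
    using refl1 \<open>z \<in> ball p r - {p}\<close> \<open>line_reflection p d1 z = w\<close> by force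
  have eq2: "f z * cnj (f w') = g z * cnj (g w')"
    using refl2 \<open>z \<in> ball p r - {p}\<close> by (simp add: w'_def)
  have "f z \<noteq> 0"
    using eq1 \<open>g z \<noteq> 0\<close> \<open>g w \<noteq> 0\<close> by auto
  have "cnj (f w / g w) = g z / f z"
    using eq1 \<open>f z \<noteq> 0\<close> \<open>g w \<noteq> 0\<close> by (simp add: field_simps mult.commute)
  moreover have "cnj (f w' / g w') = g z / f z"
    using eq2 \<open>f z \<noteq> 0\<close> \<open>g w' \<noteq> 0\<close> by (simp add: field_simps mult.commute)
  ultimately show ?thesis
    by (metis complex_cnj_cnj w'_def z_def)
qed

lemma quotient_rotation_invariant_if_norm_eq_on_segments:
  fixes f g :: "complex \<Rightarrow> complex"
  assumes "f holomorphic_on ball p r" "g holomorphic_on ball p r"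
    and "a1 \<noteq> b1" "p \<in> closed_segment a1 b1" and "a2 \<noteq> b2" "p \<in> closed_segment a2 b2"
    and "\<forall>z \<in> closed_segment a1 b1 \<union> closed_segment a2 b2. cmod (f z) = cmod (g z)"
    and "\<forall>z \<in> ball p r - {p}. g z \<noteq> 0"
    and "\<zeta> = cnj ((b1 - a1) * cnj (b2 - a2)) / ((b1 - a1) * cnj (b2 - a2))"
    and "w \<in> ball p r - {p}"
  shows "f (p + \<zeta> * (w - p)) / g (p + \<zeta> * (w - p)) = f w / g w"
  using quotient_invariant_under_two_line_reflections[of "b1 - a1" "b2 - a2" p r f g w]
    mult_cnj_line_reflection_eq[OF assms(1,2,3,4)] mult_cnj_line_reflection_eq[OF assms(1,2,5,6)] assms(3-)
  by (simp add: line_reflection_comp)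

lemma unit_complex_eq_cis_or_cis_minus:
  assumes "cmod z = 1" "Re z = cos t"
  shows "z = cis t \<or> z = cis (- t)"
proof -
  have "(Im z)\<^sup>2 = 1 - (cos t)\<^sup>2"
    using assms cmod_power2[of z] by simp
  also have "\<dots> = (sin t)\<^sup>2"
    by (simp add: sin_squared_eq)
  finally have "(Im z)\<^sup>2 = (sin t)\<^sup>2" .
  then have "Im z = sin t \<or> Im z = - sin t"
    by (simp add: power2_eq_iff)
  then show ?thesis
    using assms(2) by (auto intro: complex_eqI)
qed

lemma Re_cnj_divide_self:
  fixes w :: complex
  assumes "w \<noteq> 0"
  shows "Re (cnj w / w) = 2 * (Re w / cmod w)\<^sup>2 - 1"
proof -
  have "Re (cnj w / w) = ((Re w)\<^sup>2 - (Im w)\<^sup>2) / (cmod w)\<^sup>2"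
    by (simp add: Re_divide' power2_eq_square)
  also have "(Re w)\<^sup>2 - (Im w)\<^sup>2 = 2 * (Re w)\<^sup>2 - (cmod w)\<^sup>2"
    using cmod_power2[of w] by linarith
  also have "(2 * (Re w)\<^sup>2 - (cmod w)\<^sup>2) / (cmod w)\<^sup>2 = 2 * (Re w / cmod w)\<^sup>2 - 1"
    using assms by (simp add: power_divide diff_divide_distrib)
  finally show ?thesis .
qed

lemma cos_double_line_angle:
  assumes "d1 \<noteq> 0" "d2 \<noteq> 0"
  shows "cos (2 * line_angle d1 d2) = Re (cnj (d1 * cnj d2) / (d1 * cnj d2))"
proof -
  define w where "w = d1 * cnj d2"
  have "w \<noteq> 0"
    using assms by (simp add: w_def)
  have "\<bar>Re w\<bar> / cmod w \<le> 1"
    using \<open>w \<noteq> 0\<close> abs_Re_le_cmod[of w] by simp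
  then have "cos (line_angle d1 d2) = \<bar>Re w\<bar> / cmod w"
    by (simp add: line_angle_def w_def norm_mult cos_arccos_abs)
  then have "cos (2 * line_angle d1 d2) = 2 * (Re w / cmod w)\<^sup>2 - 1"
    by (simp add: cos_double_cos power_divide)
  also have "\<dots> = Re (cnj w / w)"
    using Re_cnj_divide_self[OF \<open>w \<noteq> 0\<close>] by simp
  finally show ?thesis
    unfolding w_def .
qed

lemma power_ne_1_if_Re_eq_cos_irrational:
  fixes \<zeta> :: complex
  assumes "cmod \<zeta> = 1" "Re \<zeta> = cos (2 * \<theta>)" "\<not> (\<exists>q \<in> \<rat>. \<theta> = pi * q)" "k > 0"
  shows "\<zeta> ^ k \<noteq> 1"
proof
  assume "\<zeta> ^ k = 1"
  moreover have "Re (\<zeta> ^ k) = cos (real k * (2 * \<theta>))"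
    using unit_complex_eq_cis_or_cis_minus[OF assms(1,2)] by (auto simp: Complex.DeMoivre)
  ultimately obtain n :: int where "real k * (2 * \<theta>) = n * 2 * pi"
    by (auto simp: cos_one_2pi_int)
  then have "\<theta> = pi * (of_int n / of_nat k)"
    using \<open>k > 0\<close> by (simp add: field_simps)
  then show False
    using assms(3) by (metis Rats_divide Rats_of_int Rats_of_nat)
qed

lemma line_rotation_not_root_of_unity:
  assumes "d1 \<noteq> 0" "d2 \<noteq> 0" "\<not> (\<exists>q \<in> \<rat>. line_angle d1 d2 = pi * q)" "k > 0"
  shows "(cnj (d1 * cnj d2) / (d1 * cnj d2)) ^ k \<noteq> 1"
proof (rule power_ne_1_if_Re_eq_cos_irrational[OF _ _ assms(3,4)])
  show "cmod (cnj (d1 * cnj d2) / (d1 * cnj d2)) = 1"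
    using assms(1,2) by (simp add: norm_divide norm_mult)
  show "Re (cnj (d1 * cnj d2) / (d1 * cnj d2)) = cos (2 * line_angle d1 d2)"
    using cos_double_line_angle[OF assms(1,2)] by simp
qed

lemma inj_power_if_not_root_of_unity:
  fixes \<zeta> :: "'a::idom"
  assumes "\<zeta> \<noteq> 0" "\<forall>k > 0. \<zeta> ^ k \<noteq> 1"
  shows "inj (\<lambda>k. \<zeta> ^ k)"
proof (rule linorder_injI)
  fix j k :: nat
  assume "j < k"
  then have "\<zeta> ^ k = \<zeta> ^ j * \<zeta> ^ (k - j)"
    by (simp flip: power_add)
  then show "\<zeta> ^ j \<noteq> \<zeta> ^ k"
    using assms \<open>j < k\<close> by auto
qed

text \<open>The orbit of \<open>w\<close> is an infinite subset of a compact circle, so the zeros of \<open>F\<close>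
  accumulate inside \<open>S\<close>.\<close>
lemma holomorphic_vanishing_on_rotation_orbit:
  fixes F :: "complex \<Rightarrow> complex"
  assumes "F holomorphic_on S" "open S" "connected S"
    and sphere: "sphere p (dist p w) \<subseteq> S"
    and "cmod \<zeta> = 1" "\<forall>k > 0. \<zeta> ^ k \<noteq> 1" "w \<noteq> p"
    and orbit_zero: "\<And>k. F (p + \<zeta> ^ k * (w - p)) = 0"
    and "z \<in> S"
  shows "F z = 0"
proof -
  define orbit where "orbit k = p + \<zeta> ^ k * (w - p)" for k
  have "inj (\<lambda>k. \<zeta> ^ k)"
    using assms(5,6) by (intro inj_power_if_not_root_of_unity) auto
  then have "inj orbit"
    using \<open>w \<noteq> p\<close> by (auto simp: inj_def orbit_def)
  moreover have "range orbit \<subseteq> {z \<in> sphere p (dist p w). F z = 0}"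
    using \<open>cmod \<zeta> = 1\<close> orbit_zero
    by (auto simp: orbit_def dist_norm norm_mult norm_power norm_minus_commute)
  ultimately have "infinite {z \<in> sphere p (dist p w). F z = 0}"
    using range_inj_infinite infinite_super by blast
  then have "F constant_on S"
    using holomorphic_compact_finite_zeros[OF assms(1-3) compact_sphere sphere] by blast
  moreover have "w \<in> S" "F w = 0"
    using sphere orbit_zero[of 0] by auto
  ultimately show ?thesis
    using \<open>z \<in> S\<close> by (metis constant_on_def)
qed

lemma eq_const_mult_if_quotient_rotation_invariant:
  fixes f g :: "complex \<Rightarrow> complex"
  assumes "f holomorphic_on S" "g holomorphic_on S" "open S" "connected S"
    and "r > 0" "ball p r \<subseteq> S" and g_nonzero: "\<forall>z \<in> ball p r - {p}. g z \<noteq> 0"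
    and "cmod \<zeta> = 1" "\<forall>k > 0. \<zeta> ^ k \<noteq> 1"
    and invariant: "\<forall>w \<in> ball p r - {p}. f (p + \<zeta> * (w - p)) / g (p + \<zeta> * (w - p)) = f w / g w"
  obtains c where "\<forall>z \<in> S. f z = c * g z"
proof -
  define w where "w = p + of_real (r / 2)"
  define c where "c = f w / g w"
  have orbit_in: "p + \<zeta> ^ k * (w - p) \<in> ball p r - {p}" for k
    using \<open>r > 0\<close> \<open>cmod \<zeta> = 1\<close> by (auto simp: w_def dist_norm norm_mult norm_power)
  have orbit_quotient: "f (p + \<zeta> ^ k * (w - p)) / g (p + \<zeta> ^ k * (w - p)) = c" for k
  proof (induction k)
    case (Suc k)
    define u where "u = p + \<zeta> ^ k * (w - p)"
    have "p + \<zeta> ^ Suc k * (w - p) = p + \<zeta> * (u - p)"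
      by (simp add: u_def algebra_simps)
    moreover have "f (p + \<zeta> * (u - p)) / g (p + \<zeta> * (u - p)) = f u / g u"
      using invariant orbit_in[of k] unfolding u_def by blast
    ultimately show ?case
      using Suc.IH by (simp only: u_def)
  qed (simp add: c_def)
  have "f z - c * g z = 0" if "z \<in> S" for z
  proof (rule holomorphic_vanishing_on_rotation_orbit[where F = "\<lambda>z. f z - c * g z" and p = p and w = w])
    show "sphere p (dist p w) \<subseteq> S"
      using \<open>r > 0\<close> \<open>ball p r \<subseteq> S\<close> by (auto simp: w_def dist_norm)
    show "f (p + \<zeta> ^ k * (w - p)) - c * g (p + \<zeta> ^ k * (w - p)) = 0" for k
      using orbit_quotient[of k] g_nonzero orbit_in[of k] by (auto simp: field_simps)
  qed (use assms that in \<open>auto intro!: holomorphic_intros simp: w_def\<close>)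
  then show ?thesis
    using that by auto
qed

lemma holomorphic_nonzero_on_punctured_ball:
  fixes g :: "complex \<Rightarrow> complex"
  assumes "g holomorphic_on S" "open S" "connected S" "p \<in> S" "q \<in> S" "g q \<noteq> 0"
  obtains r where "r > 0" "ball p r \<subseteq> S" "\<forall>z \<in> ball p r - {p}. g z \<noteq> 0"
proof -
  have "\<forall>\<^sub>F z in at p. g z \<noteq> 0 \<and> z \<in> S"
    using non_zero_neighbour_alt[OF assms] .
  moreover obtain r0 where "r0 > 0" "ball p r0 \<subseteq> S"
    using assms(2,4) open_contains_ball by blast
  ultimately obtain r1 where "r1 > 0" "\<forall>z. z \<noteq> p \<and> dist z p < r1 \<longrightarrow> g z \<noteq> 0"
    by (auto simp: eventually_at)
  then show ?thesis
    using \<open>r0 > 0\<close> \<open>ball p r0 \<subseteq> S\<close>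
    by (intro that[of "min r0 r1"]) (auto simp: dist_commute)
qed

theorem theorem2p1:
  fixes f g :: "complex \<Rightarrow> complex" and a1 b1 a2 b2 :: complex and \<theta> :: real
  assumes "f holomorphic_on ball 0 1" and "g holomorphic_on ball 0 1"
    and "a1 \<noteq> b1" and "a2 \<noteq> b2"
    and "closed_segment a1 b1 \<subseteq> ball 0 1" and "closed_segment a2 b2 \<subseteq> ball 0 1"
    and "closed_segment a1 b1 \<inter> closed_segment a2 b2 \<noteq> {}"
    and "\<theta> = line_angle (b1 - a1) (b2 - a2)"
    and "0 < \<theta>" and "\<theta> < pi / 2"
    and "\<not> (\<exists>q \<in> \<rat>. \<theta> = pi * q)"
    and "\<forall>z \<in> closed_segment a1 b1 \<union> closed_segment a2 b2. cmod (f z) = cmod (g z)"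
  shows "\<exists>\<beta>. cmod \<beta> = 1 \<and> (\<forall>z \<in> ball 0 1. f z = \<beta> * g z)"
proof -
  obtain p where p1: "p \<in> closed_segment a1 b1" and p2: "p \<in> closed_segment a2 b2"
    using assms(7) by blast
  then have "p \<in> ball 0 1"
    using assms(5) by blast
  show ?thesis
  proof (cases "\<forall>z \<in> closed_segment a1 b1. g z = 0")
    case True
    then have "\<forall>z \<in> closed_segment a1 b1. f z = 0"
      using assms(12) by (metis UnI1 norm_eq_zero)
    then have "f z = 0 \<and> g z = 0" if "z \<in> ball 0 1" for z
      using True analytic_continuation[OF _ open_ball connected_ball assms(5) \<open>p \<in> ball 0 1\<close>
          islimpt_closed_segment[OF assms(3) p1] _ that] assms(1,2) by blast
    then show ?thesis
      by (intro exI[of _ 1]) auto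
  next
    case False
    then obtain q where q: "q \<in> closed_segment a1 b1" "g q \<noteq> 0"
      by blast
    then obtain r where r: "r > 0" "ball p r \<subseteq> ball 0 1" "\<forall>z \<in> ball p r - {p}. g z \<noteq> 0"
      using holomorphic_nonzero_on_punctured_ball[OF assms(2) open_ball connected_ball \<open>p \<in> ball 0 1\<close>]
        assms(5) by blast
    have "f holomorphic_on ball p r" "g holomorphic_on ball p r"
      using assms(1,2) r(2) by (auto intro: holomorphic_on_subset)
    define \<zeta> where "\<zeta> = cnj ((b1 - a1) * cnj (b2 - a2)) / ((b1 - a1) * cnj (b2 - a2))"
    have "\<forall>w \<in> ball p r - {p}. f (p + \<zeta> * (w - p)) / g (p + \<zeta> * (w - p)) = f w / g w"
      using quotient_rotation_invariant_if_norm_eq_on_segments[OF _ _ assms(3) p1 assms(4) p2 assms(12)]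
        \<open>f holomorphic_on ball p r\<close> \<open>g holomorphic_on ball p r\<close> r(3) \<zeta>_def by blast
    moreover have "cmod \<zeta> = 1"
      using assms(3,4) by (simp add: \<zeta>_def norm_divide norm_mult del: complex_cnj_diff)
    moreover have "\<forall>k > 0. \<zeta> ^ k \<noteq> 1"
      using line_rotation_not_root_of_unity[of "b1 - a1" "b2 - a2"] assms(3,4,8,11)
      by (simp add: \<zeta>_def)
    ultimately obtain c where c: "\<forall>z \<in> ball 0 1. f z = c * g z"
      using eq_const_mult_if_quotient_rotation_invariant[OF assms(1,2) open_ball connected_ball r]
      by blast
    have "cmod c * cmod (g q) = cmod (g q)"
      using c q(1) assms(5,12) by (metis UnI1 norm_mult subsetD)
    then have "cmod c = 1"
      using q(2) by simp
    then show ?thesis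
      using c by blast
  qed
qed

end
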